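(* Let $X$ be a real Banach space with $\dim X\ge 2$ and let $\alpha,\beta>0$. Let $(f_n)$ be a sequence in $B_{X^*}$ and $(x_n)$ a sequence in $B_X$ such that $\lim_{n\to\infty}f_n(x_n)=1$. Then for any sequence $(g_n)$ in $B_{X^*}$ with $\liminf_{n\to\infty}g_n(x_n)>0$, $$DW(X,\alpha,\beta)\ge(\alpha+\beta)\max\left\{\liminf_{n\to\infty}\|g_n(x_n)f_n-g_n\|,\,1\right\}\ge(\alpha+\beta)\max\left\{\liminf_{n\to\infty}g_n(x_n)\|f_n-g_n\|,\,1\right\}.$$
   Context: $B_X$ and $B_{X^*}$ denote the closed unit balls of $X$ and of its dual $X^*$. For $\alpha,\beta>0$, $$DW(X,\alpha,\beta)=\sup\left\{\frac{\alpha\|x\|+\beta\|y\|}{\|x-y\|}\left\|\frac{x}{\|x\|}-\frac{y}{\|y\|}\right\|: x,y\in X\setminus\{0\},\ x\neq y\right\}.$$ *)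

theory Defs
  imports "HOL-Analysis.Analysis"
begin

text \<open>The constant DW(X,alpha,beta) of the paper. The space X is the type 'a;
  the supremum is a real supremum (the set is nonempty when dim X >= 2 and
  bounded above by 2(alpha+beta)).\<close>
definition DW :: "'a::real_normed_vector itself \<Rightarrow> real \<Rightarrow> real \<Rightarrow> real" where
  "DW _ \<alpha> \<beta> = Sup {(\<alpha> * norm x + \<beta> * norm y) / norm (x - y)
        * norm (inverse (norm x) *\<^sub>R x - inverse (norm y) *\<^sub>R y)
       | x y :: 'a. x \<noteq> 0 \<and> y \<noteq> 0 \<and> x \<noteq> y}"

end

theory Submission
  imports Defs
begin

text \<open>Test the supremum defining DW on the pair u = x n, y = x n - s z, where z \<in> B_X
  nearly attains the norm of g n - g n (x n) f n and s > 0 is small. Evaluating g n at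
  u/|u| - y/|y| shows that this difference has norm about s l / (1 + s), while |u - y| \<le> s;
  letting n \<rightarrow> \<infinity> gives DW \<ge> ((\<alpha> + \<beta>) - \<beta> s) l / (1 + s), and then s \<rightarrow> 0.
  The bound DW \<ge> \<alpha> + \<beta> comes from the pair (u, -u), and the second inequality is the
  pointwise estimate c |f - g| \<le> |c f - g|, valid as soon as the left-hand side exceeds 1.\<close>

lemma norm_normalized_diff_le:
  fixes x y :: "'a::real_normed_vector"
  assumes "x \<noteq> 0" "y \<noteq> 0" "norm y \<le> norm x"
  shows "norm (inverse (norm x) *\<^sub>R x - inverse (norm y) *\<^sub>R y) \<le> 2 * norm (x - y) / norm x"
proof -
  have nx: "norm x > 0" "norm y > 0" using assms by auto
  have "inverse (norm x) *\<^sub>R x - inverse (norm y) *\<^sub>R y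
      = inverse (norm x) *\<^sub>R (x - y) + (inverse (norm x) - inverse (norm y)) *\<^sub>R y"
    by (simp add: algebra_simps)
  hence "norm (inverse (norm x) *\<^sub>R x - inverse (norm y) *\<^sub>R y)
      \<le> norm (inverse (norm x) *\<^sub>R (x - y)) + norm ((inverse (norm x) - inverse (norm y)) *\<^sub>R y)"
    by (metis norm_triangle_ineq)
  also have "norm (inverse (norm x) *\<^sub>R (x - y)) = norm (x - y) / norm x"
    using nx by (simp add: divide_inverse mult.commute)
  also have "norm ((inverse (norm x) - inverse (norm y)) *\<^sub>R y) = (norm x - norm y) / norm x"
    using nx assms(3) by (simp add: abs_if field_simps le_imp_inverse_le)
  also have "(norm x - norm y) / norm x \<le> norm (x - y) / norm x"
    using nx norm_triangle_ineq2[of x y] by (simp add: divide_right_mono)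
  finally show ?thesis by simp
qed

lemma DW_term_le:
  fixes x y :: "'a::real_normed_vector"
  assumes "x \<noteq> 0" "y \<noteq> 0" "x \<noteq> y" "\<alpha> > 0" "\<beta> > 0"
  shows "(\<alpha> * norm x + \<beta> * norm y) / norm (x - y)
        * norm (inverse (norm x) *\<^sub>R x - inverse (norm y) *\<^sub>R y) \<le> 2 * (\<alpha> + \<beta>)"
proof -
  define M where "M = max (norm x) (norm y)"
  have M: "M > 0" "norm x \<le> M" "norm y \<le> M" using assms by (auto simp: M_def less_max_iff_disj)
  have d: "norm (x - y) > 0" using assms by simp
  have w: "norm (inverse (norm x) *\<^sub>R x - inverse (norm y) *\<^sub>R y) \<le> 2 * norm (x - y) / M"
  proof (cases "norm y \<le> norm x")
    case True thus ?thesis using norm_normalized_diff_le[OF assms(1,2) True] by (simp add: M_def max_def)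
  next
    case False
    hence "norm (inverse (norm y) *\<^sub>R y - inverse (norm x) *\<^sub>R x) \<le> 2 * norm (y - x) / norm y"
      using norm_normalized_diff_le[OF assms(2,1)] by simp
    thus ?thesis using False by (simp add: M_def max_def norm_minus_commute)
  qed
  have A: "0 \<le> \<alpha> * norm x + \<beta> * norm y" "\<alpha> * norm x + \<beta> * norm y \<le> (\<alpha> + \<beta>) * M"
    using assms M by (auto simp: distrib_right intro!: add_mono mult_left_mono)
  have "(\<alpha> * norm x + \<beta> * norm y) / norm (x - y)
        * norm (inverse (norm x) *\<^sub>R x - inverse (norm y) *\<^sub>R y)
      \<le> (\<alpha> * norm x + \<beta> * norm y) / norm (x - y) * (2 * norm (x - y) / M)"
    using w A d by (intro mult_left_mono) auto
  also have "\<dots> = 2 * (\<alpha> * norm x + \<beta> * norm y) / M" using d M by (simp add: field_simps)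
  also have "\<dots> \<le> 2 * ((\<alpha> + \<beta>) * M) / M" using A M by (intro divide_right_mono) auto
  also have "\<dots> = 2 * (\<alpha> + \<beta>)" using M by simp
  finally show ?thesis .
qed

lemma DW_ge_term:
  fixes x y :: "'a::real_normed_vector"
  assumes "x \<noteq> 0" "y \<noteq> 0" "x \<noteq> y" "\<alpha> > 0" "\<beta> > 0"
  shows "(\<alpha> * norm x + \<beta> * norm y) / norm (x - y)
        * norm (inverse (norm x) *\<^sub>R x - inverse (norm y) *\<^sub>R y) \<le> DW TYPE('a) \<alpha> \<beta>"
  unfolding DW_def
proof (rule cSup_upper)
  show "bdd_above {(\<alpha> * norm x + \<beta> * norm y) / norm (x - y)
        * norm (inverse (norm x) *\<^sub>R x - inverse (norm y) *\<^sub>R y)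
       | x y :: 'a. x \<noteq> 0 \<and> y \<noteq> 0 \<and> x \<noteq> y}"
    using DW_term_le[OF _ _ _ assms(4,5)] by (auto intro!: bdd_aboveI[where M="2*(\<alpha>+\<beta>)"])
qed (use assms in auto)

lemma DW_ge_add:
  fixes u :: "'a::real_normed_vector"
  assumes "u \<noteq> 0" "\<alpha> > 0" "\<beta> > 0"
  shows "\<alpha> + \<beta> \<le> DW TYPE('a) \<alpha> \<beta>"
proof -
  have u: "norm u > 0" using assms by simp
  have twice: "u - (-u) = 2 *\<^sub>R u" by (simp add: scaleR_2)
  have "u \<noteq> - u"
  proof
    assume "u = - u"
    with twice have "2 *\<^sub>R u = 0" by simp
    with assms(1) show False by simp
  qed
  hence "(\<alpha> * norm u + \<beta> * norm (-u)) / norm (u - (-u))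
        * norm (inverse (norm u) *\<^sub>R u - inverse (norm (-u)) *\<^sub>R (-u)) \<le> DW TYPE('a) \<alpha> \<beta>"
    using DW_ge_term[of u "-u" \<alpha> \<beta>] assms by simp
  also have "inverse (norm u) *\<^sub>R u - inverse (norm (-u)) *\<^sub>R (-u) = inverse (norm u) *\<^sub>R (u - (-u))"
    by (simp only: norm_minus_cancel scaleR_diff_right)
  also have "(\<alpha> * norm u + \<beta> * norm (-u)) / norm (u - (-u)) * norm (inverse (norm u) *\<^sub>R (u - (-u)))
      = \<alpha> + \<beta>"
    using u unfolding twice by (simp add: field_simps)
  finally show ?thesis .
qed

lemma abs_blinfun_apply_le:
  fixes h :: "'a::real_normed_vector \<Rightarrow>\<^sub>L real"
  assumes "norm h \<le> 1"
  shows "\<bar>blinfun_apply h v\<bar> \<le> norm v"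
  using norm_blinfun[of h v] mult_right_mono[OF assms norm_ge_zero[of v]] by simp

lemma exists_unit_ball_blinfun_ge:
  fixes h :: "'a::real_normed_vector \<Rightarrow>\<^sub>L real"
  assumes "l < norm h" "0 < l"
  obtains z where "norm z \<le> 1" "l \<le> blinfun_apply h z"
proof -
  have "\<exists>z. norm z \<le> 1 \<and> l \<le> blinfun_apply h z"
  proof (rule ccontr)
    assume "\<not> ?thesis"
    hence below: "blinfun_apply h z < l" if "norm z \<le> 1" for z
      using that by force
    have "\<bar>blinfun_apply h z\<bar> \<le> l * norm z" for z
    proof (cases "z = 0")
      case False
      define v where "v = inverse (norm z) *\<^sub>R z"
      have "blinfun_apply h v < l" "blinfun_apply h (-v) < l"
        using below False by (simp_all add: v_def)
      hence "\<bar>blinfun_apply h v\<bar> \<le> l" by (simp add: blinfun.minus_right)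
      moreover have "blinfun_apply h v = blinfun_apply h z / norm z"
        by (simp add: v_def blinfun.scaleR_right divide_inverse mult.commute)
      ultimately show ?thesis using False by (simp add: abs_div pos_divide_le_eq)
    qed simp
    hence "norm h \<le> l" using assms(2) by (intro norm_blinfun_bound) auto
    with assms(1) show False by simp
  qed
  with that show ?thesis by blast
qed

lemma blinfun_normalized_diff_eq:
  fixes g :: "'a::real_normed_vector \<Rightarrow>\<^sub>L real" and u z :: 'a and s :: real
  defines "y \<equiv> u - s *\<^sub>R z"
  assumes "u \<noteq> 0" "y \<noteq> 0"
  shows "blinfun_apply g (inverse (norm u) *\<^sub>R u - inverse (norm y) *\<^sub>R y)
           = (blinfun_apply g u * (norm y - norm u) + norm u * s * blinfun_apply g z)
             / (norm u * norm y)"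
proof -
  have "blinfun_apply g y = blinfun_apply g u - s * blinfun_apply g z"
    by (simp add: y_def blinfun.diff_right blinfun.scaleR_right)
  moreover have "blinfun_apply g (inverse (norm u) *\<^sub>R u - inverse (norm y) *\<^sub>R y)
      = blinfun_apply g u / norm u - blinfun_apply g y / norm y"
    by (simp add: blinfun.diff_right blinfun.scaleR_right divide_inverse_commute)
  ultimately have "blinfun_apply g (inverse (norm u) *\<^sub>R u - inverse (norm y) *\<^sub>R y)
      = blinfun_apply g u / norm u - (blinfun_apply g u - s * blinfun_apply g z) / norm y"
    by simp
  moreover have "0 < norm u" "0 < norm y" using assms(2,3) by simp_all
  ultimately show ?thesis by (simp add: field_simps)
qed

lemma normalized_diff_numerator_ge:
  fixes f g :: "'a::real_normed_vector \<Rightarrow>\<^sub>L real" and u z :: 'a and s l :: real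
  defines "y \<equiv> u - s *\<^sub>R z"
  assumes f: "norm f \<le> 1" and g: "norm g \<le> 1" and u: "norm u \<le> 1" and z: "norm z \<le> 1"
    and gu: "0 \<le> blinfun_apply g u" and s: "0 < s"
    and l: "l \<le> blinfun_apply g z - blinfun_apply g u * blinfun_apply f z"
  shows "s * l - (1 + s) * (1 - blinfun_apply f u)
           \<le> blinfun_apply g u * (norm y - norm u) + norm u * s * blinfun_apply g z"
proof -
  define c where "c = blinfun_apply g u"
  define \<delta> where "\<delta> = 1 - blinfun_apply f u"
  have r: "1 - \<delta> \<le> norm u" using abs_blinfun_apply_le[OF f, of u] by (auto simp: \<delta>_def)
  have N: "1 - \<delta> - s * blinfun_apply f z \<le> norm y"
    using abs_blinfun_apply_le[OF f, of y]
    by (auto simp: \<delta>_def y_def blinfun.diff_right blinfun.scaleR_right)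
  have c: "0 \<le> c" "c \<le> 1" using gu abs_blinfun_apply_le[OF g, of u] u by (auto simp: c_def)
  have gz: "\<bar>blinfun_apply g z\<bar> \<le> 1" using abs_blinfun_apply_le[OF g, of z] z by simp
  have "\<delta> \<ge> 0" using r u by simp
  have "- c * \<delta> - c * (s * blinfun_apply f z) \<le> c * (norm y - norm u)"
    using mult_left_mono[of "- \<delta> - s * blinfun_apply f z" "norm y - norm u" c] c(1) N u
    by (simp add: algebra_simps)
  moreover have "s * blinfun_apply g z - s * \<delta> \<le> norm u * s * blinfun_apply g z"
  proof -
    have "(1 - norm u) * blinfun_apply g z \<le> \<delta>"
      using mult_left_le[of "blinfun_apply g z" "1 - norm u"] gz u r by linarith
    from mult_left_mono[OF this, of s] s show ?thesis by (simp add: algebra_simps)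
  qed
  moreover have "c * \<delta> \<le> \<delta>" using c \<open>\<delta> \<ge> 0\<close> by (simp add: mult_left_le_one_le)
  moreover have "s * l \<le> s * blinfun_apply g z - c * (s * blinfun_apply f z)"
    using mult_left_mono[OF l, of s] s by (simp add: c_def algebra_simps)
  ultimately show ?thesis by (simp add: c_def[symmetric] \<delta>_def[symmetric] algebra_simps)
qed

lemma norm_normalized_diff_ge:
  fixes f g :: "'a::real_normed_vector \<Rightarrow>\<^sub>L real" and u z :: 'a and s l :: real
  defines "y \<equiv> u - s *\<^sub>R z"
  assumes f: "norm f \<le> 1" and g: "norm g \<le> 1" and u: "norm u \<le> 1" and z: "norm z \<le> 1"
    and gu: "0 \<le> blinfun_apply g u" and s: "0 < s" and nonzero: "u \<noteq> 0" "y \<noteq> 0"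
    and l: "l \<le> blinfun_apply g z - blinfun_apply g u * blinfun_apply f z"
  shows "s * l - (1 + s) * (1 - blinfun_apply f u)
           \<le> (1 + s) * norm (inverse (norm u) *\<^sub>R u - inverse (norm y) *\<^sub>R y)"
proof -
  define w where "w = inverse (norm u) *\<^sub>R u - inverse (norm y) *\<^sub>R y"
  define P where "P = s * l - (1 + s) * (1 - blinfun_apply f u)"
  have rN: "0 < norm u * norm y" "norm u * norm y \<le> 1 + s"
  proof -
    have "norm (s *\<^sub>R z) \<le> s" using mult_left_le[OF z] s by simp
    hence "norm y \<le> 1 + s"
      using norm_triangle_ineq4[of u "s *\<^sub>R z"] u unfolding y_def by linarith
    moreover have "norm u * norm y \<le> norm y" using mult_right_mono[OF u, of "norm y"] by simp
    ultimately show "norm u * norm y \<le> 1 + s" by linarith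
  qed (use nonzero in simp)
  show ?thesis
  proof (cases "P \<le> 0")
    case False
    have "P / (1 + s) \<le> P / (norm u * norm y)" using False rN by (intro divide_left_mono) auto
    also have "\<dots> \<le> blinfun_apply g w"
      unfolding w_def y_def blinfun_normalized_diff_eq[OF nonzero[unfolded y_def]]
      using normalized_diff_numerator_ge[OF f g u z gu s l] rN
      by (intro divide_right_mono) (auto simp: P_def y_def)
    also have "\<dots> \<le> norm w" using abs_blinfun_apply_le[OF g, of w] by simp
    finally show ?thesis using s by (simp add: P_def w_def pos_divide_le_eq mult.commute)
  next
    case True
    have "0 \<le> (1 + s) * norm w" using s by simp
    with True show ?thesis unfolding P_def w_def by linarith
  qed
qed

lemma DW_ge_perturbed_pair:
  fixes f g :: "'a::real_normed_vector \<Rightarrow>\<^sub>L real" and u z :: 'a and s l \<alpha> \<beta> :: real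
  assumes f: "norm f \<le> 1" and g: "norm g \<le> 1" and u: "norm u \<le> 1" and z: "norm z \<le> 1"
    and gu: "0 \<le> blinfun_apply g u" and \<alpha>: "0 < \<alpha>" and \<beta>: "0 < \<beta>" and s: "0 < s" and l: "0 < l"
    and gap: "l \<le> blinfun_apply g z - blinfun_apply g u * blinfun_apply f z"
    and s_fu: "s < blinfun_apply f u"
    and fu_close: "(1 + s) * (1 - blinfun_apply f u) \<le> s * l"
  shows "((\<alpha> + \<beta>) * blinfun_apply f u - \<beta> * s) * (s * l - (1 + s) * (1 - blinfun_apply f u))
           \<le> s * (1 + s) * DW TYPE('a) \<alpha> \<beta>"
proof -
  define y where "y = u - s *\<^sub>R z"
  define w where "w = inverse (norm u) *\<^sub>R u - inverse (norm y) *\<^sub>R y"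
  define A where "A = \<alpha> * norm u + \<beta> * norm y"
  define P where "P = s * l - (1 + s) * (1 - blinfun_apply f u)"
  have fu: "blinfun_apply f u \<le> norm u" using abs_blinfun_apply_le[OF f, of u] by simp
  have sz: "norm (s *\<^sub>R z) \<le> s" using mult_left_le[OF z] s by simp
  have y: "blinfun_apply f u - s \<le> norm y"
    using norm_triangle_ineq2[of u "s *\<^sub>R z"] fu sz unfolding y_def by linarith
  have "z \<noteq> 0" using gap l by (auto simp: blinfun.zero_right)
  hence uy: "u \<noteq> y" "0 < norm (u - y)" "norm (u - y) \<le> s"
    using s sz by (simp_all add: y_def)
  have nonzero: "u \<noteq> 0" "y \<noteq> 0" using fu y s_fu s by auto
  have "(\<alpha> + \<beta>) * blinfun_apply f u - \<beta> * s \<le> A"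
    using mult_left_mono[OF fu less_imp_le[OF \<alpha>]] mult_left_mono[OF y less_imp_le[OF \<beta>]]
    unfolding A_def distrib_right right_diff_distrib by linarith
  moreover have "P \<le> (1 + s) * norm w"
    using norm_normalized_diff_ge[OF f g u z gu s nonzero[unfolded y_def] gap] by (simp add: P_def w_def y_def)
  moreover have "0 \<le> P" using fu_close by (simp add: P_def)
  moreover have "0 \<le> A" using \<alpha> \<beta> by (simp add: A_def)
  ultimately have "((\<alpha> + \<beta>) * blinfun_apply f u - \<beta> * s) * P \<le> A * ((1 + s) * norm w)"
    by (intro mult_mono) auto
  also have "\<dots> = (1 + s) * (s * (A / s * norm w))" using s by simp
  also have "\<dots> \<le> (1 + s) * (s * DW TYPE('a) \<alpha> \<beta>)"
  proof -
    have "A / s * norm w \<le> A / norm (u - y) * norm w"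
      using uy s \<open>0 \<le> A\<close> by (intro mult_right_mono divide_left_mono) auto
    also have "\<dots> \<le> DW TYPE('a) \<alpha> \<beta>"
      using DW_ge_term[OF nonzero uy(1) \<alpha> \<beta>] by (simp add: A_def w_def)
    finally show ?thesis using s by (intro mult_left_mono) auto
  qed
  finally show ?thesis by (simp add: P_def mult_ac)
qed

lemma DW_ge_gap_at_step:
  fixes f g :: "nat \<Rightarrow> ('a::real_normed_vector \<Rightarrow>\<^sub>L real)" and x :: "nat \<Rightarrow> 'a"
    and s l \<alpha> \<beta> :: real
  assumes \<alpha>: "0 < \<alpha>" and \<beta>: "0 < \<beta>" and s: "0 < s" "s < 1" and l: "0 < l"
    and f: "\<And>n. norm (f n) \<le> 1" and g: "\<And>n. norm (g n) \<le> 1" and x: "\<And>n. norm (x n) \<le> 1"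
    and lim: "(\<lambda>n. blinfun_apply (f n) (x n)) \<longlonglongrightarrow> 1"
    and gx: "\<forall>\<^sub>F n in sequentially. 0 \<le> blinfun_apply (g n) (x n)"
    and gap: "\<forall>\<^sub>F n in sequentially. l < norm (blinfun_apply (g n) (x n) *\<^sub>R f n - g n)"
  shows "((\<alpha> + \<beta>) - \<beta> * s) * l \<le> (1 + s) * DW TYPE('a) \<alpha> \<beta>"
proof -
  define E where "E n = ((\<alpha> + \<beta>) * blinfun_apply (f n) (x n) - \<beta> * s)
    * (s * l - (1 + s) * (1 - blinfun_apply (f n) (x n)))" for n
  have E_lim: "E \<longlonglongrightarrow> ((\<alpha> + \<beta>) * 1 - \<beta> * s) * (s * l - (1 + s) * (1 - 1))"
    unfolding E_def by (intro tendsto_intros lim)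
  have defect_lim: "(\<lambda>n. (1 + s) * (1 - blinfun_apply (f n) (x n))) \<longlonglongrightarrow> (1 + s) * (1 - 1)"
    by (intro tendsto_intros lim)
  have close: "\<forall>\<^sub>F n in sequentially. (1 + s) * (1 - blinfun_apply (f n) (x n)) < s * l"
    using order_tendstoD(2)[OF defect_lim, of "s * l"] s l by simp
  have "\<forall>\<^sub>F n in sequentially. s < blinfun_apply (f n) (x n)"
    using order_tendstoD(1)[OF lim] s by simp
  with close gx gap have "\<forall>\<^sub>F n in sequentially. E n \<le> s * (1 + s) * DW TYPE('a) \<alpha> \<beta>"
  proof eventually_elim
    case (elim n)
    define c where "c = blinfun_apply (g n) (x n)"
    have "l < norm (g n - c *\<^sub>R f n)" using elim(3) by (simp add: c_def norm_minus_commute)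
    then obtain z where z: "norm z \<le> 1" "l \<le> blinfun_apply (g n - c *\<^sub>R f n) z"
      using exists_unit_ball_blinfun_ge l by blast
    show ?case unfolding E_def
      using z elim l
      by (intro DW_ge_perturbed_pair[OF f g x z(1) _ \<alpha> \<beta> s(1) l])
        (auto simp: c_def minus_blinfun.rep_eq scaleR_blinfun.rep_eq)
  qed
  from tendsto_le[OF trivial_limit_sequentially tendsto_const E_lim this]
  have "s * (((\<alpha> + \<beta>) - \<beta> * s) * l) \<le> s * ((1 + s) * DW TYPE('a) \<alpha> \<beta>)"
    by (simp add: algebra_simps)
  thus ?thesis using s by simp
qed

lemma DW_ge_gap:
  fixes f g :: "nat \<Rightarrow> ('a::real_normed_vector \<Rightarrow>\<^sub>L real)" and x :: "nat \<Rightarrow> 'a"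
    and l \<alpha> \<beta> :: real
  assumes \<alpha>: "0 < \<alpha>" and \<beta>: "0 < \<beta>" and l: "0 < l"
    and f: "\<And>n. norm (f n) \<le> 1" and g: "\<And>n. norm (g n) \<le> 1" and x: "\<And>n. norm (x n) \<le> 1"
    and lim: "(\<lambda>n. blinfun_apply (f n) (x n)) \<longlonglongrightarrow> 1"
    and gx: "\<forall>\<^sub>F n in sequentially. 0 \<le> blinfun_apply (g n) (x n)"
    and gap: "\<forall>\<^sub>F n in sequentially. l < norm (blinfun_apply (g n) (x n) *\<^sub>R f n - g n)"
  shows "(\<alpha> + \<beta>) * l \<le> DW TYPE('a) \<alpha> \<beta>"
proof -
  have "((\<lambda>s. (1 + s) * DW TYPE('a) \<alpha> \<beta>) \<longlongrightarrow> (1 + 0) * DW TYPE('a) \<alpha> \<beta>) (at_right 0)"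
       "((\<lambda>s. ((\<alpha> + \<beta>) - \<beta> * s) * l) \<longlongrightarrow> ((\<alpha> + \<beta>) - \<beta> * 0) * l) (at_right 0)"
    by (intro tendsto_intros)+
  moreover have "\<forall>\<^sub>F s in at_right 0. ((\<alpha> + \<beta>) - \<beta> * s) * l \<le> (1 + s) * DW TYPE('a) \<alpha> \<beta>"
    using DW_ge_gap_at_step[OF \<alpha> \<beta> _ _ l f g x lim gx gap]
    by (intro eventually_at_rightI[of 0 1]) auto
  ultimately show ?thesis using tendsto_le[OF trivial_limit_at_right_real] by fastforce
qed

lemma mult_norm_diff_le_norm_scaleR_diff:
  fixes f g :: "'a::real_normed_vector"
  assumes f: "norm f \<le> 1" and c: "\<bar>c\<bar> \<le> 1" and gt1: "1 < c * norm (f - g)"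
  shows "c * norm (f - g) \<le> norm (c *\<^sub>R f - g)"
proof -
  have c_pos: "0 < c" using gt1 zero_less_mult_pos2[of c "norm (f - g)"] by fastforce
  have "c * norm (f - g) \<le> norm (f - g)" using c c_pos by (intro mult_left_le_one_le) auto
  hence fg: "1 \<le> norm (f - g)" using gt1 by linarith
  have "norm (f - g) \<le> norm (c *\<^sub>R f - g) + norm ((1 - c) *\<^sub>R f)"
    using norm_triangle_ineq[of "c *\<^sub>R f - g" "(1 - c) *\<^sub>R f"] by (simp add: algebra_simps)
  also have "norm ((1 - c) *\<^sub>R f) \<le> 1 - c" using c f by (simp add: mult_left_le)
  finally have "norm (f - g) - (1 - c) \<le> norm (c *\<^sub>R f - g)" by simp
  moreover have "(1 - c) * 1 \<le> (1 - c) * norm (f - g)" using c fg by (intro mult_left_mono) auto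
  ultimately show ?thesis by (simp add: algebra_simps)
qed

lemma ereal_le_if_positive_below:
  fixes L :: ereal
  assumes "0 \<le> B" and below: "\<And>l. 0 < l \<Longrightarrow> ereal l < L \<Longrightarrow> l \<le> B"
  shows "L \<le> ereal B"
proof (rule dense_le)
  fix y assume "y < L"
  thus "y \<le> ereal B"
    using below \<open>0 \<le> B\<close> by (cases y) (force simp: not_less)+
qed

lemma max_Liminf_one_mono:
  fixes a b :: "'i \<Rightarrow> ereal"
  assumes "\<forall>\<^sub>F n in F. 1 < a n \<longrightarrow> a n \<le> b n"
  shows "max (Liminf F a) 1 \<le> max (Liminf F b) 1"
proof (cases "Liminf F a \<le> 1")
  case False
  hence "\<forall>\<^sub>F n in F. 1 < a n" by (intro less_LiminfD) simp
  with assms have "\<forall>\<^sub>F n in F. a n \<le> b n" by eventually_elim blast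
  thus ?thesis by (intro max.mono Liminf_mono) auto
qed simp

lemma max_Liminf_mult_norm_diff_le:
  fixes f g :: "'i \<Rightarrow> 'a::real_normed_vector" and c :: "'i \<Rightarrow> real"
  assumes "\<And>n. norm (f n) \<le> 1" "\<And>n. \<bar>c n\<bar> \<le> 1"
  shows "max (Liminf F (\<lambda>n. ereal (c n * norm (f n - g n)))) 1
           \<le> max (Liminf F (\<lambda>n. ereal (norm (c n *\<^sub>R f n - g n)))) 1"
  using mult_norm_diff_le_norm_scaleR_diff[OF assms]
  by (intro max_Liminf_one_mono always_eventually) (simp add: one_ereal_def)

lemma DW_ge_Liminf_gap:
  fixes f g :: "nat \<Rightarrow> ('a::real_normed_vector \<Rightarrow>\<^sub>L real)" and x :: "nat \<Rightarrow> 'a"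
    and u :: 'a and \<alpha> \<beta> :: real
  assumes u: "u \<noteq> 0" and \<alpha>: "0 < \<alpha>" and \<beta>: "0 < \<beta>"
    and f: "\<And>n. norm (f n) \<le> 1" and g: "\<And>n. norm (g n) \<le> 1" and x: "\<And>n. norm (x n) \<le> 1"
    and lim: "(\<lambda>n. blinfun_apply (f n) (x n)) \<longlonglongrightarrow> 1"
    and gx: "\<forall>\<^sub>F n in sequentially. 0 \<le> blinfun_apply (g n) (x n)"
  shows "ereal (\<alpha> + \<beta>)
           * max (Liminf sequentially (\<lambda>n. ereal (norm (blinfun_apply (g n) (x n) *\<^sub>R f n - g n)))) 1
         \<le> ereal (DW TYPE('a) \<alpha> \<beta>)"
    (is "_ * max ?L 1 \<le> _")
proof -
  have ab: "0 < \<alpha> + \<beta>" using \<alpha> \<beta> by simp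
  have one_le: "1 \<le> DW TYPE('a) \<alpha> \<beta> / (\<alpha> + \<beta>)"
    using DW_ge_add[OF u \<alpha> \<beta>] ab by (simp add: pos_le_divide_eq)
  have "?L \<le> ereal (DW TYPE('a) \<alpha> \<beta> / (\<alpha> + \<beta>))"
  proof (rule ereal_le_if_positive_below)
    fix l assume l: "0 < l" and "ereal l < ?L"
    from less_LiminfD[OF this(2)]
    have "\<forall>\<^sub>F n in sequentially. l < norm (blinfun_apply (g n) (x n) *\<^sub>R f n - g n)" by simp
    hence "(\<alpha> + \<beta>) * l \<le> DW TYPE('a) \<alpha> \<beta>" by (rule DW_ge_gap[OF \<alpha> \<beta> l f g x lim gx])
    thus "l \<le> DW TYPE('a) \<alpha> \<beta> / (\<alpha> + \<beta>)" using ab by (simp add: pos_le_divide_eq mult.commute)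
  qed (use one_le in simp)
  with one_le have "ereal (\<alpha> + \<beta>) * max ?L 1 \<le> ereal (\<alpha> + \<beta>) * ereal (DW TYPE('a) \<alpha> \<beta> / (\<alpha> + \<beta>))"
    using ab by (intro ereal_mult_left_mono) (auto simp: one_ereal_def)
  thus ?thesis using ab by simp
qed

theorem lemma1:
  fixes \<alpha> \<beta> :: real
    and f g :: "nat \<Rightarrow> ('a::banach \<Rightarrow>\<^sub>L real)"
    and x :: "nat \<Rightarrow> 'a"
  assumes dim2: "\<exists>B::'a set. independent B \<and> card B = 2"
    and \<alpha>: "\<alpha> > 0" and \<beta>: "\<beta> > 0"
    and f: "\<And>n. norm (f n) \<le> 1"
    and x: "\<And>n. norm (x n) \<le> 1"
    and lim: "(\<lambda>n. blinfun_apply (f n) (x n)) \<longlonglongrightarrow> 1"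
    and g: "\<And>n. norm (g n) \<le> 1"
    and gpos: "Liminf sequentially (\<lambda>n. ereal (blinfun_apply (g n) (x n))) > 0"
  shows "ereal (DW TYPE('a) \<alpha> \<beta>)
           \<ge> ereal (\<alpha> + \<beta>) * max (Liminf sequentially
                (\<lambda>n. ereal (norm (blinfun_apply (g n) (x n) *\<^sub>R f n - g n)))) 1
         \<and> ereal (\<alpha> + \<beta>) * max (Liminf sequentially
                (\<lambda>n. ereal (norm (blinfun_apply (g n) (x n) *\<^sub>R f n - g n)))) 1
           \<ge> ereal (\<alpha> + \<beta>) * max (Liminf sequentially
                (\<lambda>n. ereal (blinfun_apply (g n) (x n) * norm (f n - g n)))) 1"
    (is "?D \<ge> ereal (\<alpha> + \<beta>) * max ?L 1 \<and> _ \<ge> ereal (\<alpha> + \<beta>) * max ?M 1")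
proof
  obtain u :: 'a where "u \<noteq> 0"
    using dim2 dependent_zero by (metis card.empty empty_iff equals0I zero_neq_numeral)
  moreover have "\<forall>\<^sub>F n in sequentially. 0 \<le> blinfun_apply (g n) (x n)"
    using less_LiminfD[OF gpos] by eventually_elim simp
  ultimately show "ereal (\<alpha> + \<beta>) * max ?L 1 \<le> ?D"
    by (rule DW_ge_Liminf_gap[OF _ \<alpha> \<beta> f g x lim])
next
  have "max ?M 1 \<le> max ?L 1"
    using f order_trans[OF abs_blinfun_apply_le[OF g] x] by (rule max_Liminf_mult_norm_diff_le)
  thus "ereal (\<alpha> + \<beta>) * max ?M 1 \<le> ereal (\<alpha> + \<beta>) * max ?L 1"
    using \<alpha> \<beta> by (intro ereal_mult_left_mono) auto
qed

end
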